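(* Let $\gamma\geq0$ and $G=(V,E,\omega)\in\mathcal C_\gamma$, and assume $r=0$. Define, for $i,j\in V$, $\tilde\omega_{ij}:=-d_j^r\sum_{m=1}^{n-1}\Lambda_m\phi^m_i\phi^m_j$ if $i\neq j$ and $\tilde\omega_{ii}:=0$. Let $\tilde E\subset V^2$ contain the undirected edge $(i,j)$ if and only if $\tilde\omega_{ij}>0$. Then $\tilde G=(V,\tilde E,\tilde\omega)\in\mathcal G$. Moreover, if $\tilde\Delta$ denotes the graph Laplacian on $\tilde G$ with parameter $\tilde r=0$, i.e. $(\tilde\Delta u)_i=\sum_{j}\tilde\omega_{ij}(u_i-u_j)$, then $\tilde\Delta=L$.
   Context: $\mathcal{G}$ is the set of finite, simple, connected, undirected, edge-weighted graphs $G=(V,E,\omega)$ with $V=\{1,\dots,n\}$, $n\geq2$, weights $\omega_{ij}=\omega_{ji}>0$ for $(i,j)\in E$ and $\omega_{ij}=0$ otherwise. $d_i=\sum_j\omega_{ij}$. $\mathcal V$: functions $V\to\mathbb R$. With parameter $r\in[0,1]$: $\langle u,v\rangle_{\mathcal V}=\sum_id_i^ru_iv_i$, $(\Delta u)_i=d_i^{-r}\sum_j\omega_{ij}(u_i-u_j)$, $\mathcal M(u)=\sum_id_i^ru_i$, $\mathrm{vol}(V)=\sum_id_i^r$, $\mathcal A(u)=\frac{\mathcal M(u)}{\mathrm{vol}(V)}\chi_V$ ($\chi_S$ is the indicator of $S$). For $u\in\mathcal V$, let $\varphi$ be the unique solution of $\Delta\varphi=u-\mathcal A(u)$, $\mathcal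 M(\varphi)=0$, and $Lu:=\Delta u+\gamma\varphi$. Let $0=\lambda_0<\lambda_1\leq\dots\leq\lambda_{n-1}$ be the eigenvalues of $\Delta$ with $\langle\cdot,\cdot\rangle_{\mathcal V}$-orthonormal eigenfunctions $\phi^0=\mathrm{vol}(V)^{-1/2}\chi_V,\phi^1,\dots,\phi^{n-1}$, and $\Lambda_0=0$, $\Lambda_m=\lambda_m+\gamma/\lambda_m$ ($m\geq1$). Equilibrium measure: for a proper subset $S\subsetneq V$, $\nu^S$ is the unique $\nu\in\mathcal V$ with $(\Delta\nu)_i=1$ for $i\in S$ and $\nu_i=0$ for $i\notin S$. For $j\in V$, $f^j:=\nu^{V\setminus\{j\}}-\mathcal A(\nu^{V\setminus\{j\}})$. Classes: $\mathcal C^0=\{G\in\mathcal G:\forall j\in V\ \forall i\in V\setminus\{j\}:\ \omega_{ij}>0\text{ or }f^j_i\geq0\}$; for $\gamma>0$, $\mathcal C_\gamma=\{G\in\mathcal C^0:\forall j\ \forall i\neq j:\ \omega_{ij}=0\text{ or }d_i^{-r}\omega_{ij}+\gamma\frac{d_j^r}{\mathrm{vol}(V)}f^j_i>0\}$; and $\mathcal C_0:=\mathcal G$. *)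

theory Defs
  imports Complex_Main
begin

text \<open>A weighted graph on V = {1..n} is encoded by its weight function
  w :: nat => nat => real (w i j = 0 means no edge; values outside V are 0).\<close>

definition verts :: "nat \<Rightarrow> nat set" where
  "verts n = {1..n}"

definition is_wgraph :: "(nat \<Rightarrow> nat \<Rightarrow> real) \<Rightarrow> nat \<Rightarrow> bool" where
  "is_wgraph w n \<longleftrightarrow> n \<ge> 2
     \<and> (\<forall>i j. w i j = w j i)
     \<and> (\<forall>i j. w i j \<ge> 0)
     \<and> (\<forall>i. w i i = 0)
     \<and> (\<forall>i j. (i \<notin> verts n \<or> j \<notin> verts n) \<longrightarrow> w i j = 0)
     \<and> (\<forall>i\<in>verts n. \<forall>j\<in>verts n.
          (i, j) \<in> {(a, b). a \<in> verts n \<and> b \<in> verts n \<and> w a b > 0}\<^sup>*)"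

definition deg :: "(nat \<Rightarrow> nat \<Rightarrow> real) \<Rightarrow> nat \<Rightarrow> nat \<Rightarrow> real" where
  "deg w n i = (\<Sum>j\<in>verts n. w i j)"

definition ip :: "real \<Rightarrow> (nat \<Rightarrow> nat \<Rightarrow> real) \<Rightarrow> nat \<Rightarrow> (nat \<Rightarrow> real) \<Rightarrow> (nat \<Rightarrow> real) \<Rightarrow> real" where
  "ip r w n u v = (\<Sum>i\<in>verts n. deg w n i powr r * u i * v i)"

definition lap :: "real \<Rightarrow> (nat \<Rightarrow> nat \<Rightarrow> real) \<Rightarrow> nat \<Rightarrow> (nat \<Rightarrow> real) \<Rightarrow> nat \<Rightarrow> real" where
  "lap r w n u i = deg w n i powr (-r) * (\<Sum>j\<in>verts n. w i j * (u i - u j))"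

definition mass :: "real \<Rightarrow> (nat \<Rightarrow> nat \<Rightarrow> real) \<Rightarrow> nat \<Rightarrow> (nat \<Rightarrow> real) \<Rightarrow> real" where
  "mass r w n u = (\<Sum>i\<in>verts n. deg w n i powr r * u i)"

definition vol :: "real \<Rightarrow> (nat \<Rightarrow> nat \<Rightarrow> real) \<Rightarrow> nat \<Rightarrow> real" where
  "vol r w n = (\<Sum>i\<in>verts n. deg w n i powr r)"

definition avg :: "real \<Rightarrow> (nat \<Rightarrow> nat \<Rightarrow> real) \<Rightarrow> nat \<Rightarrow> (nat \<Rightarrow> real) \<Rightarrow> nat \<Rightarrow> real" where
  "avg r w n u i = (if i \<in> verts n then mass r w n u / vol r w n else 0)"

definition potential :: "real \<Rightarrow> (nat \<Rightarrow> nat \<Rightarrow> real) \<Rightarrow> nat \<Rightarrow> (nat \<Rightarrow> real) \<Rightarrow> nat \<Rightarrow> real" where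
  "potential r w n u = (THE p. (\<forall>i\<in>verts n. lap r w n p i = u i - avg r w n u i)
       \<and> mass r w n p = 0 \<and> (\<forall>i. i \<notin> verts n \<longrightarrow> p i = 0))"

definition Lop :: "real \<Rightarrow> (nat \<Rightarrow> nat \<Rightarrow> real) \<Rightarrow> nat \<Rightarrow> real \<Rightarrow> (nat \<Rightarrow> real) \<Rightarrow> nat \<Rightarrow> real" where
  "Lop r w n \<gamma> u i = lap r w n u i + \<gamma> * potential r w n u i"

definition eqmeas :: "real \<Rightarrow> (nat \<Rightarrow> nat \<Rightarrow> real) \<Rightarrow> nat \<Rightarrow> nat set \<Rightarrow> nat \<Rightarrow> real" where
  "eqmeas r w n S = (THE \<nu>. (\<forall>i\<in>S. lap r w n \<nu> i = 1)
       \<and> (\<forall>i\<in>verts n - S. \<nu> i = 0) \<and> (\<forall>i. i \<notin> verts n \<longrightarrow> \<nu> i = 0))"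

definition fj :: "real \<Rightarrow> (nat \<Rightarrow> nat \<Rightarrow> real) \<Rightarrow> nat \<Rightarrow> nat \<Rightarrow> nat \<Rightarrow> real" where
  "fj r w n j i = eqmeas r w n (verts n - {j}) i
       - avg r w n (eqmeas r w n (verts n - {j})) i"

definition classC0 :: "real \<Rightarrow> (nat \<Rightarrow> nat \<Rightarrow> real) \<Rightarrow> nat \<Rightarrow> bool" where
  "classC0 r w n \<longleftrightarrow> is_wgraph w n \<and>
     (\<forall>j\<in>verts n. \<forall>i\<in>verts n - {j}. w i j > 0 \<or> fj r w n j i \<ge> 0)"

definition classC :: "real \<Rightarrow> real \<Rightarrow> (nat \<Rightarrow> nat \<Rightarrow> real) \<Rightarrow> nat \<Rightarrow> bool" where
  "classC r \<gamma> w n \<longleftrightarrow>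
     (if \<gamma> = 0 then is_wgraph w n
      else classC0 r w n \<and>
        (\<forall>j\<in>verts n. \<forall>i\<in>verts n - {j}. w i j = 0 \<or>
           deg w n i powr (-r) * w i j
             + \<gamma> * (deg w n j powr r / vol r w n) * fj r w n j i > 0))"

end

theory Submission
  imports Defs "Jordan_Normal_Form.Determinant"
begin

(* For r = 0 the Laplacian is the symmetric matrix D - W, and an orthonormal eigenbasis
   diagonalises it. The potential solving Delta phi = u - A(u) is then the pseudo-inverse
   sum_{m>0} lam_m^-1 <u,phi^m> phi^m, so L has the symmetric kernel
   K_ij = sum_{m>0} Lambda_m phi^m_i phi^m_j with zero row sums, i.e. L is the Laplacian of
   the weights -K_ij. Evaluating L on the unit vector e_j, whose potential is -f^j / n,
   gives -K_ij = w_ij + gamma f^j_i / n off the diagonal: the class C_gamma conditions make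
   these weights nonnegative and positive on every edge of G, so connectivity survives. *)

lemma orthonormal_family_complete:
  fixes f :: "nat \<Rightarrow> nat \<Rightarrow> real"
  assumes orth: "\<forall>m<n. \<forall>k<n. (\<Sum>i\<in>{1..n}. f m i * f k i) = (if m = k then 1 else 0)"
    and i: "i \<in> {1..n}" and j: "j \<in> {1..n}"
  shows "(\<Sum>m<n. f m i * f m j) = (if i = j then 1 else 0)"
proof -
  have shift: "(\<Sum>i\<in>{1..n}. g i) = (\<Sum>a<n. g (Suc a))" for g :: "nat \<Rightarrow> real"
    by (induct n) auto
  define A where "A = mat n n (\<lambda>(a, m). f m (Suc a))"
  have A: "A \<in> carrier_mat n n" "transpose_mat A \<in> carrier_mat n n"
    by (auto simp: A_def)
  have "transpose_mat A * A = 1\<^sub>m n"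
  proof (rule eq_matI)
    fix m k assume mk: "m < dim_row (1\<^sub>m n :: real mat)" "k < dim_col (1\<^sub>m n :: real mat)"
    then have "(transpose_mat A * A) $$ (m, k) = (\<Sum>a<n. f m (Suc a) * f k (Suc a))"
      by (auto simp: A_def scalar_prod_def lessThan_atLeast0)
    also have "\<dots> = (\<Sum>i\<in>{1..n}. f m i * f k i)"
      by (rule shift[symmetric])
    finally show "(transpose_mat A * A) $$ (m, k) = 1\<^sub>m n $$ (m, k)"
      using orth mk by simp
  qed (auto simp: A_def)
  then have "A * transpose_mat A = 1\<^sub>m n"
    using mat_mult_left_right_inverse A by blast
  moreover obtain a b where ab: "i = Suc a" "j = Suc b" "a < n" "b < n"
    using i j by (metis Suc_le_eq atLeastAtMost_iff not0_implies_Suc not_one_le_zero)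
  moreover have "(A * transpose_mat A) $$ (a, b) = (\<Sum>m<n. f m i * f m j)"
    using ab by (auto simp: A_def scalar_prod_def lessThan_atLeast0)
  ultimately show ?thesis by simp
qed

lemma is_wgraph_if_dominates_edges:
  assumes G: "is_wgraph w n"
    and sym: "\<And>i j. w' i j = w' j i"
    and nonneg: "\<And>i j. w' i j \<ge> 0"
    and diag: "\<And>i. w' i i = 0"
    and outside: "\<And>i j. i \<notin> verts n \<or> j \<notin> verts n \<Longrightarrow> w' i j = 0"
    and edges: "\<And>i j. i \<in> verts n \<Longrightarrow> j \<in> verts n \<Longrightarrow> w i j > 0 \<Longrightarrow> w' i j > 0"
  shows "is_wgraph w' n"
proof -
  have "{(a, b). a \<in> verts n \<and> b \<in> verts n \<and> w a b > 0}\<^sup>*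
      \<subseteq> {(a, b). a \<in> verts n \<and> b \<in> verts n \<and> w' a b > 0}\<^sup>*"
    using edges by (intro rtrancl_mono) auto
  then show ?thesis
    using G sym nonneg diag outside by (auto simp: is_wgraph_def)
qed

locale wgraph =
  fixes w :: "nat \<Rightarrow> nat \<Rightarrow> real" and n :: nat
  assumes wgraph: "is_wgraph w n"
begin

abbreviation "V \<equiv> verts n"

lemma n_ge_2: "n \<ge> 2"
  using wgraph by (simp add: is_wgraph_def)

lemma finite_V [simp]: "finite V"
  by (simp add: verts_def)

lemma card_V [simp]: "card V = n"
  by (simp add: verts_def)

lemma weight_sym: "w i j = w j i"
  using wgraph by (simp add: is_wgraph_def)

lemma weight_nonneg: "w i j \<ge> 0"
  using wgraph by (simp add: is_wgraph_def)

lemma weight_diag [simp]: "w i i = 0"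
  using wgraph by (simp add: is_wgraph_def)

lemma deg_pos:
  assumes i: "i \<in> V"
  shows "deg w n i > 0"
proof -
  define j where "j = (if i = 1 then 2 else (1::nat))"
  have j: "j \<in> V" "j \<noteq> i"
    using i n_ge_2 by (auto simp: j_def verts_def)
  have "(i, j) \<in> {(a, b). a \<in> V \<and> b \<in> V \<and> w a b > 0}\<^sup>*"
    using wgraph i j by (auto simp: is_wgraph_def)
  then obtain k where k: "k \<in> V" "w i k > 0"
    using j(2) by (cases rule: converse_rtranclE) auto
  show ?thesis
    unfolding deg_def by (rule sum_pos2[OF finite_V k(1)]) (use k weight_nonneg in auto)
qed

lemma deg_neq_0 [simp]: "i \<in> V \<Longrightarrow> deg w n i \<noteq> 0"
  using deg_pos[of i] by simp

lemma lap_0: "i \<in> V \<Longrightarrow> lap 0 w n u i = (\<Sum>j\<in>V. w i j * (u i - u j))"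
  by (simp add: lap_def)

lemma ip_0: "ip 0 w n u v = (\<Sum>i\<in>V. u i * v i)"
  by (simp add: ip_def cong: sum.cong)

lemma mass_0: "mass 0 w n u = (\<Sum>i\<in>V. u i)"
  by (simp add: mass_def cong: sum.cong)

lemma vol_0: "vol 0 w n = real n"
  by (simp add: vol_def cong: sum.cong)

lemma avg_0: "i \<in> V \<Longrightarrow> avg 0 w n u i = (\<Sum>j\<in>V. u j) / real n"
  by (simp add: avg_def mass_0 vol_0)

lemma lap_0_cong: "i \<in> V \<Longrightarrow> (\<And>j. j \<in> V \<Longrightarrow> u j = v j) \<Longrightarrow> lap 0 w n u i = lap 0 w n v i"
  by (simp add: lap_0)

lemma lap_0_sum:
  assumes "i \<in> V"
  shows "lap 0 w n (\<lambda>x. \<Sum>m\<in>M. a m * f m x) i = (\<Sum>m\<in>M. a m * lap 0 w n (f m) i)"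
  using assms
  by (simp add: lap_0 sum_distrib_left sum_subtractf[symmetric] sum.swap[of _ V] algebra_simps)

lemma lap_0_diff: "i \<in> V \<Longrightarrow> lap 0 w n (\<lambda>x. f x - g x) i = lap 0 w n f i - lap 0 w n g i"
  by (simp add: lap_0 sum_subtractf[symmetric] algebra_simps)

lemma sum_lap_0: "(\<Sum>i\<in>V. lap 0 w n u i) = 0"
proof -
  have "(\<Sum>i\<in>V. \<Sum>j\<in>V. w i j * u j) = (\<Sum>i\<in>V. \<Sum>j\<in>V. w i j * u i)"
    by (subst sum.swap) (simp add: weight_sym)
  then show ?thesis
    by (simp add: lap_0 sum_subtractf algebra_simps)
qed

lemma classC_perturbed_weight:
  assumes C: "classC 0 \<gamma> w n" and \<gamma>: "\<gamma> \<ge> 0"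
    and i: "i \<in> V" and j: "j \<in> V" and ij: "i \<noteq> j"
  shows "w i j + \<gamma> * fj 0 w n j i / real n \<ge> 0"
    and "w i j > 0 \<Longrightarrow> w i j + \<gamma> * fj 0 w n j i / real n > 0"
proof -
  have C0: "\<gamma> = 0 \<or> w i j > 0 \<or> fj 0 w n j i \<ge> 0"
    and C: "\<gamma> = 0 \<or> w i j = 0 \<or> w i j + \<gamma> * fj 0 w n j i / real n > 0"
    using C i j ij by (auto simp: classC_def classC0_def vol_0 split: if_splits)
  show pos: "w i j + \<gamma> * fj 0 w n j i / real n > 0" if "w i j > 0"
    using C that by auto
  show "w i j + \<gamma> * fj 0 w n j i / real n \<ge> 0"
    using C0 pos \<gamma> weight_nonneg[of i j] by (auto intro: less_imp_le)
qed

end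

locale orthonormal_eigenbasis = wgraph +
  fixes lam :: "nat \<Rightarrow> real" and \<phi> :: "nat \<Rightarrow> nat \<Rightarrow> real"
  assumes lam_0: "lam 0 = 0"
    and lam_pos: "\<forall>m\<in>{1..<n}. lam m > 0"
    and eigen: "\<forall>m<n. \<forall>i\<in>verts n. lap 0 w n (\<phi> m) i = lam m * \<phi> m i"
    and orthonormal: "\<forall>m<n. \<forall>k<n. ip 0 w n (\<phi> m) (\<phi> k) = (if m = k then 1 else 0)"
    and constant_eigen: "\<forall>i\<in>verts n. \<phi> 0 i = vol 0 w n powr (-1/2)"
begin

lemma orthonormal': "m < n \<Longrightarrow> k < n \<Longrightarrow> (\<Sum>i\<in>V. \<phi> m i * \<phi> k i) = (if m = k then 1 else 0)"
  using orthonormal by (simp add: ip_0)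

lemma constant_eigen': "i \<in> V \<Longrightarrow> \<phi> 0 i = real n powr (-1/2)"
  using constant_eigen by (simp add: vol_0)

lemma sum_lessThan_split_0: "(\<Sum>m<n. g m) = g 0 + (\<Sum>m\<in>{1..<n}. g m)"
proof -
  have "{..<n} = insert 0 {1..<n}"
    using n_ge_2 by auto
  then show ?thesis by simp
qed

lemma eigen_sum_zero:
  assumes m: "m \<in> {1..<n}"
  shows "(\<Sum>i\<in>V. \<phi> m i) = 0"
proof -
  have "(\<Sum>i\<in>V. \<phi> m i * \<phi> 0 i) = 0"
    using orthonormal'[of m 0] m by auto
  then show ?thesis
    using n_ge_2 by (simp add: constant_eigen' sum_distrib_right[symmetric])
qed

definition coeff :: "(nat \<Rightarrow> real) \<Rightarrow> nat \<Rightarrow> real" where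
  "coeff u m = (\<Sum>j\<in>V. \<phi> m j * u j)"

lemma eigen_expansion:
  assumes i: "i \<in> V"
  shows "u i = (\<Sum>m<n. coeff u m * \<phi> m i)"
proof -
  have "(\<Sum>m<n. coeff u m * \<phi> m i) = (\<Sum>j\<in>V. u j * (\<Sum>m<n. \<phi> m i * \<phi> m j))"
    by (simp add: coeff_def sum_distrib_left sum_distrib_right sum.swap[of _ V] algebra_simps)
  also have "\<dots> = (\<Sum>j\<in>V. u j * (if i = j then 1 else 0))"
    using i orthonormal_family_complete[of n \<phi> i] orthonormal' by (simp add: verts_def)
  also have "\<dots> = u i"
    using i by (simp add: if_distrib cong: if_cong)
  finally show ?thesis by simp
qed

lemma lap_0_eigen_expansion:
  assumes i: "i \<in> V"
  shows "lap 0 w n u i = (\<Sum>m<n. coeff u m * lam m * \<phi> m i)"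
proof -
  have "lap 0 w n u i = lap 0 w n (\<lambda>x. \<Sum>m<n. coeff u m * \<phi> m x) i"
    using i eigen_expansion by (intro lap_0_cong) auto
  also have "\<dots> = (\<Sum>m<n. coeff u m * lam m * \<phi> m i)"
    using i eigen by (simp add: lap_0_sum mult.assoc)
  finally show ?thesis .
qed

lemma coeff_lap_0:
  assumes k: "k < n"
  shows "coeff (lap 0 w n u) k = lam k * coeff u k"
proof -
  have "coeff (lap 0 w n u) k = (\<Sum>i\<in>V. \<phi> k i * (\<Sum>m<n. coeff u m * lam m * \<phi> m i))"
    unfolding coeff_def[of "lap 0 w n u"] by (intro sum.cong) (auto simp: lap_0_eigen_expansion)
  also have "\<dots> = (\<Sum>m<n. coeff u m * lam m * (\<Sum>i\<in>V. \<phi> k i * \<phi> m i))"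
    by (simp add: sum_distrib_left sum.swap[of _ V] algebra_simps)
  also have "\<dots> = lam k * coeff u k"
    using k by (simp add: orthonormal' if_distrib cong: if_cong)
  finally show ?thesis .
qed

lemma harmonic_imp_const:
  assumes harmonic: "\<forall>i\<in>V. lap 0 w n d i = 0" and i: "i \<in> V" and j: "j \<in> V"
  shows "d i = d j"
proof -
  have "coeff d k = 0" if k: "k \<in> {1..<n}" for k
  proof -
    have "lam k * coeff d k = coeff (lap 0 w n d) k"
      using k by (simp add: coeff_lap_0)
    also have "\<dots> = 0"
      using harmonic by (simp add: coeff_def)
    moreover have "lam k > 0"
      using lam_pos k by blast
    ultimately show ?thesis
      by simp
  qed
  then have "d x = coeff d 0 * real n powr (-1/2)" if "x \<in> V" for x
    using that eigen_expansion[of x d] sum_lessThan_split_0[of "\<lambda>m. coeff d m * \<phi> m x"]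
    by (simp add: constant_eigen')
  then show ?thesis
    using i j by simp
qed

lemma harmonic_mass_zero_imp_zero:
  assumes harmonic: "\<forall>i\<in>V. lap 0 w n d i = 0" and mass: "(\<Sum>i\<in>V. d i) = 0" and i: "i \<in> V"
  shows "d i = 0"
proof -
  have "(\<Sum>j\<in>V. d j) = real n * d i"
    using harmonic_imp_const[OF harmonic _ i] by simp
  then show ?thesis
    using mass n_ge_2 by simp
qed

definition green :: "(nat \<Rightarrow> real) \<Rightarrow> nat \<Rightarrow> real" where
  "green u x = (if x \<in> V then (\<Sum>m\<in>{1..<n}. coeff u m / lam m * \<phi> m x) else 0)"

lemma lap_green:
  assumes i: "i \<in> V"
  shows "lap 0 w n (green u) i = u i - avg 0 w n u i"
proof -
  have "lap 0 w n (green u) i = lap 0 w n (\<lambda>x. \<Sum>m\<in>{1..<n}. coeff u m / lam m * \<phi> m x) i"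
    using i by (intro lap_0_cong) (auto simp: green_def)
  also have "\<dots> = (\<Sum>m\<in>{1..<n}. coeff u m / lam m * (lam m * \<phi> m i))"
    using i by (subst lap_0_sum) (auto simp: eigen)
  also have "\<dots> = (\<Sum>m\<in>{1..<n}. coeff u m * \<phi> m i)"
  proof (intro sum.cong refl)
    fix m assume "m \<in> {1..<n}"
    then have "lam m > 0"
      using lam_pos by blast
    then show "coeff u m / lam m * (lam m * \<phi> m i) = coeff u m * \<phi> m i"
      by simp
  qed
  also have "\<dots> = u i - coeff u 0 * \<phi> 0 i"
    using eigen_expansion[OF i, of u] sum_lessThan_split_0[of "\<lambda>m. coeff u m * \<phi> m i"] by simp
  also have "coeff u 0 * \<phi> 0 i = avg 0 w n u i"
  proof -
    have "coeff u 0 * \<phi> 0 i = (real n powr (-1/2) * real n powr (-1/2)) * (\<Sum>j\<in>V. u j)"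
      using i by (simp add: coeff_def constant_eigen' sum_distrib_left[symmetric])
    also have "real n powr (-1/2) * real n powr (-1/2) = 1 / real n"
      using n_ge_2 by (simp add: powr_add[symmetric] powr_minus_divide)
    finally show ?thesis
      using i by (simp add: avg_0)
  qed
  finally show ?thesis .
qed

lemma sum_green: "(\<Sum>i\<in>V. green u i) = 0"
proof -
  have "(\<Sum>i\<in>V. green u i) = (\<Sum>i\<in>V. \<Sum>m\<in>{1..<n}. coeff u m / lam m * \<phi> m i)"
    by (simp add: green_def)
  also have "\<dots> = (\<Sum>m\<in>{1..<n}. coeff u m / lam m * (\<Sum>i\<in>V. \<phi> m i))"
    by (simp add: sum.swap[of _ V] sum_distrib_left)
  finally show ?thesis
    by (simp add: eigen_sum_zero)
qed

lemma potential_eq_green: "potential 0 w n u = green u"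
  unfolding potential_def
proof (rule the_equality)
  show "(\<forall>i\<in>V. lap 0 w n (green u) i = u i - avg 0 w n u i) \<and> mass 0 w n (green u) = 0
      \<and> (\<forall>i. i \<notin> V \<longrightarrow> green u i = 0)"
    by (simp add: lap_green mass_0 sum_green) (simp add: green_def)
next
  fix p assume p: "(\<forall>i\<in>V. lap 0 w n p i = u i - avg 0 w n u i) \<and> mass 0 w n p = 0
      \<and> (\<forall>i. i \<notin> V \<longrightarrow> p i = 0)"
  have "p i - green u i = 0" if i: "i \<in> V" for i
    by (rule harmonic_mass_zero_imp_zero[where d = "\<lambda>x. p x - green u x"])
      (use p i in \<open>auto simp: lap_0_diff lap_green sum_subtractf sum_green mass_0\<close>)
  then show "p = green u"
    using p by (auto simp: green_def fun_eq_iff)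
qed

definition unit_vec :: "nat \<Rightarrow> nat \<Rightarrow> real" where
  "unit_vec j x = (if x = j then 1 else 0)"

(* Since Delta (green (unit_vec j)) = unit_vec j - 1/n, rescaling by -n and shifting to vanish
   at j yields the equilibrium measure of V - {j}. *)

definition eq_measure :: "nat \<Rightarrow> nat \<Rightarrow> real" where
  "eq_measure j x = (if x \<in> V then real n * (green (unit_vec j) j - green (unit_vec j) x) else 0)"

lemma lap_eq_measure:
  assumes j: "j \<in> V" and i: "i \<in> V" and ij: "i \<noteq> j"
  shows "lap 0 w n (eq_measure j) i = 1"
proof -
  have "lap 0 w n (eq_measure j) i = - real n * lap 0 w n (green (unit_vec j)) i"
    using i by (simp add: lap_0 eq_measure_def sum_distrib_left algebra_simps cong: sum.cong)
  also have "\<dots> = 1"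
    using i j ij n_ge_2 by (simp add: lap_green avg_0 unit_vec_def)
  finally show ?thesis .
qed

lemma eqmeas_eq:
  assumes j: "j \<in> V"
  shows "eqmeas 0 w n (V - {j}) = eq_measure j"
  unfolding eqmeas_def
proof (rule the_equality)
  show "(\<forall>i\<in>V - {j}. lap 0 w n (eq_measure j) i = 1) \<and> (\<forall>i\<in>V - (V - {j}). eq_measure j i = 0)
      \<and> (\<forall>i. i \<notin> V \<longrightarrow> eq_measure j i = 0)"
    using j by (auto simp: lap_eq_measure eq_measure_def)
next
  fix \<nu> assume \<nu>: "(\<forall>i\<in>V - {j}. lap 0 w n \<nu> i = 1) \<and> (\<forall>i\<in>V - (V - {j}). \<nu> i = 0)
      \<and> (\<forall>i. i \<notin> V \<longrightarrow> \<nu> i = 0)"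
  define d where "d x = \<nu> x - eq_measure j x" for x
  have off_j: "\<forall>i\<in>V - {j}. lap 0 w n d i = 0"
    using \<nu> j unfolding d_def by (auto simp: lap_0_diff lap_eq_measure)
  moreover have "lap 0 w n d j = 0"
    using sum_lap_0[of d] off_j j by (simp add: sum.remove)
  ultimately have harmonic: "\<forall>i\<in>V. lap 0 w n d i = 0"
    by blast
  have "d i = 0" if "i \<in> V" for i
    using harmonic_imp_const[OF harmonic that j] \<nu> j by (simp add: d_def eq_measure_def)
  then show "\<nu> = eq_measure j"
    using \<nu> by (auto simp: d_def fun_eq_iff eq_measure_def)
qed

lemma fj_eq_green:
  assumes j: "j \<in> V" and i: "i \<in> V"
  shows "fj 0 w n j i = - real n * green (unit_vec j) i"
proof -
  have "(\<Sum>x\<in>V. eq_measure j x) = (\<Sum>x\<in>V. real n * green (unit_vec j) j - real n * green (unit_vec j) x)"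
    by (intro sum.cong) (auto simp: eq_measure_def algebra_simps)
  also have "\<dots> = real n * real n * green (unit_vec j) j"
    by (simp add: sum_subtractf sum_distrib_left[symmetric] sum_green)
  finally show ?thesis
    using i j n_ge_2 by (simp add: fj_def eqmeas_eq avg_0) (simp add: eq_measure_def algebra_simps)
qed

definition kernel :: "real \<Rightarrow> nat \<Rightarrow> nat \<Rightarrow> real" where
  "kernel \<gamma> i j = (\<Sum>m\<in>{1..<n}. (lam m + \<gamma> / lam m) * \<phi> m i * \<phi> m j)"

lemma kernel_sym: "kernel \<gamma> i j = kernel \<gamma> j i"
  by (simp add: kernel_def algebra_simps)

lemma kernel_row_sum: "(\<Sum>j\<in>V. kernel \<gamma> i j) = 0"
proof -
  have "(\<Sum>j\<in>V. kernel \<gamma> i j) = (\<Sum>m\<in>{1..<n}. (lam m + \<gamma> / lam m) * \<phi> m i * (\<Sum>j\<in>V. \<phi> m j))"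
    by (simp add: kernel_def sum_distrib_left sum.swap[of _ V])
  then show ?thesis
    by (simp add: eigen_sum_zero)
qed

lemma Lop_eq_kernel:
  assumes i: "i \<in> V"
  shows "Lop 0 w n \<gamma> u i = (\<Sum>j\<in>V. kernel \<gamma> i j * u j)"
proof -
  have "lap 0 w n u i = (\<Sum>m\<in>{1..<n}. coeff u m * lam m * \<phi> m i)"
    using lap_0_eigen_expansion[OF i, of u] sum_lessThan_split_0[of "\<lambda>m. coeff u m * lam m * \<phi> m i"]
      lam_0 by simp
  moreover have "potential 0 w n u i = (\<Sum>m\<in>{1..<n}. coeff u m / lam m * \<phi> m i)"
    using i by (simp add: potential_eq_green green_def)
  ultimately have "Lop 0 w n \<gamma> u i = (\<Sum>m\<in>{1..<n}. coeff u m * (lam m + \<gamma> / lam m) * \<phi> m i)"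
    by (simp add: Lop_def sum_distrib_left sum.distrib[symmetric] algebra_simps)
  also have "\<dots> = (\<Sum>j\<in>V. kernel \<gamma> i j * u j)"
    by (simp add: coeff_def kernel_def sum_distrib_left sum_distrib_right sum.swap[of _ V] algebra_simps)
  finally show ?thesis .
qed

lemma kernel_off_diag:
  assumes i: "i \<in> V" and j: "j \<in> V" and ij: "i \<noteq> j"
  shows "kernel \<gamma> i j = - (w i j + \<gamma> * fj 0 w n j i / real n)"
proof -
  have "kernel \<gamma> i j = Lop 0 w n \<gamma> (unit_vec j) i"
    using j by (simp add: Lop_eq_kernel[OF i] unit_vec_def if_distrib cong: if_cong)
  also have "\<dots> = lap 0 w n (unit_vec j) i + \<gamma> * green (unit_vec j) i"
    by (simp add: Lop_def potential_eq_green)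
  also have "lap 0 w n (unit_vec j) i = - w i j"
    using i j ij by (simp add: lap_0 unit_vec_def if_distrib sum_negf cong: if_cong)
  also have "green (unit_vec j) i = - fj 0 w n j i / real n"
    using fj_eq_green[OF j i] n_ge_2 by simp
  finally show ?thesis by simp
qed

lemma Lop_eq_kernel_lap:
  assumes i: "i \<in> V"
  shows "(\<Sum>j\<in>V. (if i \<noteq> j then - kernel \<gamma> i j else 0) * (u i - u j)) = Lop 0 w n \<gamma> u i"
proof -
  have "(\<Sum>j\<in>V. (if i \<noteq> j then - kernel \<gamma> i j else 0) * (u i - u j))
      = (\<Sum>j\<in>V. kernel \<gamma> i j * u j - u i * kernel \<gamma> i j)"
    by (intro sum.cong) (auto simp: algebra_simps)
  also have "\<dots> = (\<Sum>j\<in>V. kernel \<gamma> i j * u j)"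
    by (simp add: sum_subtractf sum_distrib_left[symmetric] kernel_row_sum)
  finally show ?thesis
    using Lop_eq_kernel[OF i] by simp
qed

end

theorem theorem6p15:
  fixes r \<gamma> :: real and w :: "nat \<Rightarrow> nat \<Rightarrow> real" and n :: nat
    and lam :: "nat \<Rightarrow> real" and \<phi> :: "nat \<Rightarrow> nat \<Rightarrow> real"
  assumes r0: "r = 0"
    and gam: "\<gamma> \<ge> 0"
    and G: "classC r \<gamma> w n"
    and lam0: "lam 0 = 0"
    and lampos: "\<forall>m\<in>{1..<n}. lam m > 0"
    and lamsorted: "\<forall>m k. m \<le> k \<and> k < n \<longrightarrow> lam m \<le> lam k"
    and eig: "\<forall>m<n. \<forall>i\<in>verts n. lap r w n (\<phi> m) i = lam m * \<phi> m i"
    and orth: "\<forall>m<n. \<forall>k<n. ip r w n (\<phi> m) (\<phi> k) = (if m = k then 1 else 0)"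
    and phi0: "\<forall>i\<in>verts n. \<phi> 0 i = vol r w n powr (-1/2)"
  shows "let \<Lambda> = (\<lambda>m. lam m + \<gamma> / lam m);
             wt = (\<lambda>i j. if i \<in> verts n \<and> j \<in> verts n \<and> i \<noteq> j
                     then - (deg w n j powr r) * (\<Sum>m\<in>{1..<n}. \<Lambda> m * \<phi> m i * \<phi> m j)
                     else 0)
         in is_wgraph wt n \<and>
            (\<forall>u. \<forall>i\<in>verts n.
               (\<Sum>j\<in>verts n. wt i j * (u i - u j)) = Lop r w n \<gamma> u i)"
proof -
  have "is_wgraph w n"
    using G by (auto simp: classC_def classC0_def split: if_splits)
  then interpret orthonormal_eigenbasis w n lam \<phi>
    using lam0 lampos eig orth phi0 r0 by unfold_locales auto
  define wt where "wt i j = (if i \<in> V \<and> j \<in> V \<and> i \<noteq> j then - kernel \<gamma> i j else 0)" for i j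
  have wt_off_diag: "wt i j = w i j + \<gamma> * fj 0 w n j i / real n"
    if "i \<in> V" "j \<in> V" "i \<noteq> j" for i j
    using that by (simp add: wt_def kernel_off_diag)
  have "is_wgraph wt n"
  proof (rule is_wgraph_if_dominates_edges[OF wgraph])
    show "wt i j = wt j i" for i j
      by (auto simp: wt_def kernel_sym)
    show "wt i j \<ge> 0" for i j
      using classC_perturbed_weight(1)[of \<gamma> i j] G gam r0 wt_off_diag[of i j] by (auto simp: wt_def)
    show "w i j > 0 \<Longrightarrow> wt i j > 0" if "i \<in> V" "j \<in> V" for i j
      using classC_perturbed_weight(2)[of \<gamma> i j] G gam r0 wt_off_diag[of i j] that
      by (cases "i = j") auto
  qed (auto simp: wt_def)
  moreover have "(\<Sum>j\<in>V. wt i j * (u i - u j)) = Lop r w n \<gamma> u i" if "i \<in> V" for u i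
    using Lop_eq_kernel_lap[OF that, of \<gamma> u] that r0 by (simp add: wt_def cong: sum.cong)
  moreover have "wt = (\<lambda>i j. if i \<in> V \<and> j \<in> V \<and> i \<noteq> j
      then - (deg w n j powr r) * (\<Sum>m\<in>{1..<n}. (lam m + \<gamma> / lam m) * \<phi> m i * \<phi> m j) else 0)"
    using r0 by (auto simp: wt_def kernel_def fun_eq_iff)
  ultimately show ?thesis
    unfolding Let_def by simp
qed

end
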